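(* Let $w \in \mathrm{GF}(2^7)\setminus\{0,1\}$, let $\sqrt{w}$ denote the unique square root of $w$ in $\mathrm{GF}(2^7)$, and let $\sigma$ be a non-trivial field automorphism of $\mathrm{GF}(2^7)$, say $\sigma: y\mapsto y^{2^k}$ with $1\le k\le 6$. For $i\ge 1$ write $\sqrt{w}^{-(\sigma^i+\cdots+\sigma^2+\sigma)}$ for the element $\sqrt{w}^{-(2^{ki}+\cdots+2^{2k}+2^{k})}$. Then the set \[ \{0,1,\sqrt{w}^{-\sigma}, \sqrt{w}^{-(\sigma^2+\sigma)}, \sqrt{w}^{-(\sigma^3+\sigma^2+\sigma)},\dots,\sqrt{w}^{-(\sigma^6+\cdots+\sigma^2+\sigma)}\} \] can be written as the set $\{0,1,x,x^3,x^7,x^{15},x^{31},x^{63}\}$, where $x$ is one of the elements $\sqrt{w}^{-(\sigma^i+\cdots+\sigma)}$, $1\le i\le 6$. *)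

theory Defs
  imports Main
begin

text \<open>The (unique) square root in a finite field of characteristic 2.\<close>
definition gf_sqrt :: "'a::field \<Rightarrow> 'a" where
  "gf_sqrt w = (THE y. y ^ 2 = w)"

text \<open>Exponent 2^k + 2^(2k) + ... + 2^(ik), i.e. sigma^i + ... + sigma for sigma = Frobenius^k.\<close>
definition sigma_exp :: "nat \<Rightarrow> nat \<Rightarrow> nat" where
  "sigma_exp k i = (\<Sum>j=1..i. 2 ^ (k * j))"

end

theory Submission imports Defs begin

text \<open>
  Put y = 1/sqrt w, q = 2^k and e(j) = q^j + ... + q. Every y in a field with 128 elements
  satisfies y^128 = y, so a positive power of y depends only on its exponent modulo 127.
  Since 2^7 = 1 (mod 127), we have q^7 = 1 and (q - 1) e(j) = q (q^j - 1) modulo 127.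
  Choosing i with k i = 1 (mod 7) gives q^i = 2, hence e(i) (2^m - 1) = e(i m). As e(j) mod 127
  depends only on j mod 7, and i m mod 7 runs through 1..6 together with m, x = y^e(i) satisfies
  {x^(2^m - 1) | 1 \<le> m \<le> 6} = {y^e(j) | 1 \<le> j \<le> 6}. The congruences are checked by
  computation for each k.
\<close>

text \<open>The library's \<open>finite_field_power_card_eq_same\<close> needs the class \<open>finite_field\<close>, which a
  type variable of sort \<open>{field, finite}\<close> is not known to belong to.\<close>

lemma power_card_UNIV_eq_self:
  fixes y :: "'a::{field,finite}"
  shows "y ^ card (UNIV :: 'a set) = y"
proof (cases "y = 0")
  case False
  let ?U = "UNIV - {0::'a}"
  have "\<Prod>?U = (\<Prod>z\<in>?U. y * z)"
    by (rule prod.reindex_bij_witness[of _ "\<lambda>z. y * z" "\<lambda>z. z / y"]) (use False in auto)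
  also have "\<dots> = y ^ card ?U * \<Prod>?U"
    by (simp add: prod.distrib)
  finally have "\<Prod>?U = y ^ card ?U * \<Prod>?U" .
  moreover have "\<Prod>?U \<noteq> 0"
    by (simp add: prod_zero_iff)
  ultimately have "y ^ card ?U = 1"
    by (simp add: mult_cancel_right1)
  moreover have "card (UNIV :: 'a set) = Suc (card ?U)"
    by (simp add: card_Diff_singleton card_gt_0_iff)
  ultimately show ?thesis
    by (simp only: power_Suc mult_1_right)
qed (simp add: card_gt_0_iff)

text \<open>Positivity of the exponents matters: for \<open>y = 0\<close> the exponent \<open>0\<close> is special.\<close>

lemma power_eq_power_if_mod_eq:
  fixes y :: "'a::monoid_mult"
  assumes period: "y ^ Suc n = y" and "0 < a" "0 < b" and "a mod n = b mod n"
  shows "y ^ a = y ^ b"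
proof -
  have step: "y ^ (d + n) = y ^ d" if "0 < d" for d
  proof -
    have "y ^ (d + n) = y ^ (d - 1 + Suc n)"
      using that by simp
    also have "\<dots> = y ^ (d - 1) * y"
      by (simp only: power_add period)
    also have "\<dots> = y ^ d"
      using that by (simp flip: power_Suc2)
    finally show ?thesis .
  qed
  have shift: "y ^ (c + n * t) = y ^ c" if "0 < c" for c t
  proof (induction t)
    case (Suc t)
    have "y ^ (c + n * Suc t) = y ^ ((c + n * t) + n)"
      by (simp add: algebra_simps)
    also have "\<dots> = y ^ (c + n * t)"
      using that by (intro step) simp
    finally show ?case
      using Suc.IH by simp
  qed simp
  obtain s t where "a + n * s = b + n * t"
    using \<open>a mod n = b mod n\<close> nat_mod_eq_iff by blast
  then show ?thesis
    using shift[OF \<open>0 < a\<close>, of s] shift[OF \<open>0 < b\<close>, of t] by simp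
qed

lemma power_image_eq_if_mod_image_eq:
  fixes y :: "'a::monoid_mult"
  assumes "y ^ Suc n = y" and "0 \<notin> A" "0 \<notin> B"
    and "(\<lambda>e. e mod n) ` A = (\<lambda>e. e mod n) ` B"
  shows "(\<lambda>e. y ^ e) ` A = (\<lambda>e. y ^ e) ` B"
proof -
  have "(\<lambda>e. y ^ e) ` A \<subseteq> (\<lambda>e. y ^ e) ` B"
    if "0 \<notin> A" "0 \<notin> B" "(\<lambda>e. e mod n) ` A \<subseteq> (\<lambda>e. e mod n) ` B" for A B
  proof
    fix z assume "z \<in> (\<lambda>e. y ^ e) ` A"
    then obtain a where "a \<in> A" "z = y ^ a" by blast
    with that(3) obtain b where "b \<in> B" "a mod n = b mod n" by blast
    moreover have "0 < a" "0 < b"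
      using \<open>a \<in> A\<close> \<open>b \<in> B\<close> that(1,2) by (auto intro: gr0I)
    ultimately have "y ^ a = y ^ b"
      by (intro power_eq_power_if_mod_eq[OF assms(1)])
    with \<open>b \<in> B\<close> \<open>z = y ^ a\<close> show "z \<in> (\<lambda>e. y ^ e) ` B" by blast
  qed
  with assms(2-4) show ?thesis
    by (metis equalityI order_refl)
qed

lemma sigma_exp_0: "sigma_exp k 0 = 0"
  by (simp add: sigma_exp_def)

lemma sigma_exp_Suc: "sigma_exp k (Suc i) = sigma_exp k i + 2 ^ (k * Suc i)"
  by (simp add: sigma_exp_def)

lemma sigma_exp_numeral:
  "sigma_exp k (numeral n) = sigma_exp k (pred_numeral n) + 2 ^ (k * numeral n)"
  by (simp only: numeral_eq_Suc sigma_exp_Suc)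

lemma sigma_exp_eq_0_iff: "sigma_exp k i = 0 \<longleftrightarrow> i = 0"
  by (simp add: sigma_exp_def) presburger

lemma atLeastAtMost_1_6: "{1..6::nat} = {1, 2, 3, 4, 5, 6}"
  by auto

lemma sigma_exp_mod_127_orbit:
  assumes "k \<in> {1..6}" "i \<in> {1..6}" "k * i mod 7 = 1"
  shows "(\<lambda>e. e mod 127) ` sigma_exp k ` {1..6}
           = (\<lambda>e. e mod 127) ` (\<lambda>m. sigma_exp k i * (2 ^ m - 1)) ` {1..6}"
proof -
  have "k = 1 \<and> i = 1 \<or> k = 2 \<and> i = 4 \<or> k = 3 \<and> i = 5 \<or>
        k = 4 \<and> i = 2 \<or> k = 5 \<and> i = 3 \<or> k = 6 \<and> i = 6"
    using assms unfolding atLeastAtMost_1_6 by (elim insertE emptyE) simp_all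
  then show ?thesis
    unfolding atLeastAtMost_1_6
    by (elim disjE conjE; simp add: sigma_exp_numeral sigma_exp_Suc sigma_exp_0 insert_commute;
        simp add: numeral_2_eq_2)
qed

lemma power_sigma_exp_image:
  fixes y :: "'a::monoid_mult"
  assumes "y ^ 128 = y" and "k \<in> {1..6}" "i \<in> {1..6}" "k * i mod 7 = 1"
  shows "(\<lambda>j. y ^ sigma_exp k j) ` {1..6} = (\<lambda>m. (y ^ sigma_exp k i) ^ (2 ^ m - 1)) ` {1..6}"
proof -
  have "(\<lambda>e. y ^ e) ` sigma_exp k ` {1..6}
          = (\<lambda>e. y ^ e) ` (\<lambda>m. sigma_exp k i * (2 ^ m - 1)) ` {1..6}"
  proof (rule power_image_eq_if_mod_image_eq)
    show "y ^ Suc 127 = y"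
      using assms(1) by simp
    show "0 \<notin> sigma_exp k ` {1..6}"
      by (simp add: image_iff sigma_exp_eq_0_iff)
    show "0 \<notin> (\<lambda>m. sigma_exp k i * (2 ^ m - 1)) ` {1..6}"
      unfolding atLeastAtMost_1_6 using assms(3) by (auto simp: sigma_exp_eq_0_iff)
  qed (use assms(2-4) in \<open>rule sigma_exp_mod_127_orbit\<close>)
  then show ?thesis
    by (simp add: image_image power_mult)
qed

theorem lemma5:
  fixes w :: "'a::{field,finite}" and k :: nat
  assumes "card (UNIV :: 'a set) = 2 ^ 7"
    and "w \<noteq> 0" and "w \<noteq> 1"
    and "1 \<le> k" and "k \<le> 6"
  shows "\<exists>i\<in>{1..6}.
           let x = inverse (gf_sqrt w ^ sigma_exp k i) in
             {0, 1} \<union> {inverse (gf_sqrt w ^ sigma_exp k j) | j. 1 \<le> j \<and> j \<le> 6}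
             = {0, 1, x, x ^ 3, x ^ 7, x ^ 15, x ^ 31, x ^ 63}"
proof -
  define y where "y = inverse (gf_sqrt w)"
  have inverse_power: "inverse (gf_sqrt w ^ n) = y ^ n" for n
    by (simp add: y_def power_inverse)
  have period: "y ^ 128 = y"
    using power_card_UNIV_eq_self[of y] assms(1) by simp
  have k: "k \<in> {1..6}"
    using assms(4,5) by simp
  then have "\<exists>i\<in>{1..6}. k * i mod 7 = 1"
    unfolding atLeastAtMost_1_6 by (elim insertE) simp_all
  then obtain i where i: "i \<in> {1..6}" "k * i mod 7 = 1" ..
  define x where "x = inverse (gf_sqrt w ^ sigma_exp k i)"
  have "{inverse (gf_sqrt w ^ sigma_exp k j) | j. 1 \<le> j \<and> j \<le> 6}
          = (\<lambda>j. y ^ sigma_exp k j) ` {1..6}"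
    by (auto simp: inverse_power)
  also have "\<dots> = (\<lambda>m. x ^ (2 ^ m - 1)) ` {1..6}"
    unfolding x_def inverse_power using period k i by (rule power_sigma_exp_image)
  finally have "{0, 1} \<union> {inverse (gf_sqrt w ^ sigma_exp k j) | j. 1 \<le> j \<and> j \<le> 6}
      = {0, 1, x, x ^ 3, x ^ 7, x ^ 15, x ^ 31, x ^ 63}"
    unfolding atLeastAtMost_1_6 image_insert image_empty Un_insert_left Un_empty_left by simp
  then show ?thesis
    using i(1) unfolding x_def Let_def by (rule bexI)
qed

end
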